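(* Let $T=(A_1;A_2;\dots;A_p)$ be an $n\times p\times n$ quaternion tensor whose first frontal slice $A_1\in M_n(\mathbb{H})$ is invertible. Then $\mathrm{rank}(T)=n$ if and only if the matrices $A_jA_1^{-1}$, $j=2,\dots,p$, are simultaneously diagonalizable, i.e. there is an invertible $P\in M_n(\mathbb{H})$ such that $P^{-1}A_jA_1^{-1}P$ is a diagonal (quaternion) matrix for every $j=2,\dots,p$.
   Context: $\mathbb{H}$ denotes the real quaternions. An $n_1\times n_2\times n_3$ quaternion tensor is an array $T=(T_{ijk})$ with entries in $\mathbb{H}$, $1\le i\le n_1$, $1\le j\le n_2$, $1\le k\le n_3$; it is written $T=(A_1;\dots;A_{n_2})$ where the frontal slice $A_j$ is the $n_1\times n_3$ matrix $(T_{ijk})_{i,k}$. A nonzero tensor is simple if $T_{ijk}=a_ib_jc_k$ (quaternion product in this order) for some $\vec a\in\mathbb{H}^{n_1},\vec b\in\mathbb{H}^{n_2},\vec c\in\mathbb{H}^{n_3}$. The rank of $T$ is the least number of simple tensors summing to $T$. *)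

theory Defs
  imports Complex_Main
begin

datatype quat = Quat (Re: real) (Im1: real) (Im2: real) (Im3: real)

lemma quat_eq_iff: "x = y \<longleftrightarrow> Re x = Re y \<and> Im1 x = Im1 y \<and> Im2 x = Im2 y \<and> Im3 x = Im3 y"
  by (cases x; cases y) auto

instantiation quat :: ring_1
begin

definition "0 = Quat 0 0 0 0"
definition "1 = Quat 1 0 0 0"
definition "x + y = Quat (Re x + Re y) (Im1 x + Im1 y) (Im2 x + Im2 y) (Im3 x + Im3 y)"
definition "x - y = Quat (Re x - Re y) (Im1 x - Im1 y) (Im2 x - Im2 y) (Im3 x - Im3 y)"
definition "- x = Quat (- Re x) (- Im1 x) (- Im2 x) (- Im3 x)"
definition "x * y = Quat
   (Re x * Re y - Im1 x * Im1 y - Im2 x * Im2 y - Im3 x * Im3 y)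
   (Re x * Im1 y + Im1 x * Re y + Im2 x * Im3 y - Im3 x * Im2 y)
   (Re x * Im2 y - Im1 x * Im3 y + Im2 x * Re y + Im3 x * Im1 y)
   (Re x * Im3 y + Im1 x * Im2 y - Im2 x * Im1 y + Im3 x * Re y)"

instance
  by standard
    (auto simp: quat_eq_iff zero_quat_def one_quat_def plus_quat_def minus_quat_def
       uminus_quat_def times_quat_def algebra_simps)

end

section \<open>Quaternion matrices (n x n, 0-based indices, entries outside the range irrelevant)\<close>

type_synonym qmat = "nat \<Rightarrow> nat \<Rightarrow> quat"

definition qmat_mult :: "nat \<Rightarrow> qmat \<Rightarrow> qmat \<Rightarrow> qmat" where
  "qmat_mult n A B = (\<lambda>i k. \<Sum>l<n. A i l * B l k)"

definition qmat_id :: qmat where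
  "qmat_id = (\<lambda>i k. if i = k then 1 else 0)"

definition qmat_eq :: "nat \<Rightarrow> qmat \<Rightarrow> qmat \<Rightarrow> bool" where
  "qmat_eq n A B \<longleftrightarrow> (\<forall>i<n. \<forall>k<n. A i k = B i k)"

definition qmat_inverse_of :: "nat \<Rightarrow> qmat \<Rightarrow> qmat \<Rightarrow> bool" where
  "qmat_inverse_of n A B \<longleftrightarrow>
     qmat_eq n (qmat_mult n A B) qmat_id \<and> qmat_eq n (qmat_mult n B A) qmat_id"

definition qmat_invertible :: "nat \<Rightarrow> qmat \<Rightarrow> bool" where
  "qmat_invertible n A \<longleftrightarrow> (\<exists>B. qmat_inverse_of n A B)"

definition qmat_inv :: "nat \<Rightarrow> qmat \<Rightarrow> qmat" where
  "qmat_inv n A = (SOME B. qmat_inverse_of n A B)"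

definition qmat_diagonal :: "nat \<Rightarrow> qmat \<Rightarrow> bool" where
  "qmat_diagonal n M \<longleftrightarrow> (\<forall>i<n. \<forall>k<n. i \<noteq> k \<longrightarrow> M i k = 0)"

type_synonym qtensor = "nat \<Rightarrow> nat \<Rightarrow> nat \<Rightarrow> quat"

definition simple_qtensor :: "nat \<Rightarrow> nat \<Rightarrow> nat \<Rightarrow> qtensor \<Rightarrow> bool" where
  "simple_qtensor n1 n2 n3 S \<longleftrightarrow>
     (\<exists>i<n1. \<exists>j<n2. \<exists>k<n3. S i j k \<noteq> 0) \<and>
     (\<exists>a b c :: nat \<Rightarrow> quat. \<forall>i<n1. \<forall>j<n2. \<forall>k<n3. S i j k = a i * b j * c k)"

definition qtensor_rank :: "nat \<Rightarrow> nat \<Rightarrow> nat \<Rightarrow> qtensor \<Rightarrow> nat" where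
  "qtensor_rank n1 n2 n3 T = (LEAST r. \<exists>S :: nat \<Rightarrow> qtensor.
      (\<forall>l<r. simple_qtensor n1 n2 n3 (S l)) \<and>
      (\<forall>i<n1. \<forall>j<n2. \<forall>k<n3. T i j k = (\<Sum>l<r. S l i j k)))"

text \<open>Frontal slice j (0-based) of T: the matrix (T i j k)_{i,k}.\<close>
definition frontal_slice :: "qtensor \<Rightarrow> nat \<Rightarrow> qmat" where
  "frontal_slice T j = (\<lambda>i k. T i j k)"

end

theory Submission
  imports Defs "Jordan_Normal_Form.Determinant"
begin

text \<open>A decomposition of T into r terms (a_l, b_l, c_l) amounts to a simultaneous factorization
  A_j = X D_j Y of all frontal slices, with the columns of X and the rows of Y given by the a_l
  and c_l and with diagonal D_j = diag (b_{lj}). As A_1 = X D_1 Y is invertible, r \<ge> n, and for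
  r = n the matrix X is invertible with X\<inverse> = D_1 Y A_1\<inverse>; hence
  X\<inverse> A_j A_1\<inverse> X = D_j (Y A_1\<inverse> X), where D_1 (Y A_1\<inverse> X) = 1 forces
  Y A_1\<inverse> X to be diagonal. Conversely, if P\<inverse> A_j A_1\<inverse> P = D_j are diagonal, then
  A_j = P D_j (P\<inverse> A_1) with D_1 = 1 is such a factorization with n terms.

  Quaternions do not commute, so the fact that one-sided inverses of square matrices are
  two-sided is transferred from real matrices through the faithful representation of a
  quaternion by the 4 \<times> 4 real matrix of left multiplication.\<close>

definition quat_normsq :: "quat \<Rightarrow> real" where
  "quat_normsq q = (Re q)\<^sup>2 + (Im1 q)\<^sup>2 + (Im2 q)\<^sup>2 + (Im3 q)\<^sup>2"

lemma quat_normsq_mult: "quat_normsq (p * q) = quat_normsq p * quat_normsq q"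
  unfolding quat_normsq_def times_quat_def by (simp add: power2_eq_square algebra_simps)

lemma quat_normsq_eq_0_iff: "quat_normsq q = 0 \<longleftrightarrow> q = 0"
  unfolding quat_normsq_def zero_quat_def quat_eq_iff by (simp add: add_nonneg_eq_0_iff)

instance quat :: ring_1_no_zero_divisors
  by standard (metis quat_normsq_eq_0_iff quat_normsq_mult mult_eq_0_iff)


section \<open>The real representation of quaternion matrices\<close>

definition quat_coord :: "quat \<Rightarrow> nat \<Rightarrow> real" where
  "quat_coord q a = (if a = 0 then Re q else if a = 1 then Im1 q else if a = 2 then Im2 q else Im3 q)"

definition quat_unit :: "nat \<Rightarrow> quat" where
  "quat_unit b = (if b = 0 then 1 else if b = 1 then Quat 0 1 0 0 else if b = 2 then Quat 0 0 1 0
     else Quat 0 0 0 1)"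

definition lmult_matrix :: "quat \<Rightarrow> nat \<Rightarrow> nat \<Rightarrow> real" where
  "lmult_matrix q a b = quat_coord (q * quat_unit b) a"

lemma less_4_cases: "(a::nat) < 4 \<longleftrightarrow> a = 0 \<or> a = 1 \<or> a = 2 \<or> a = 3"
  by auto

lemma sum_lessThan_4:
  fixes f :: "nat \<Rightarrow> 'a::comm_monoid_add"
  shows "(\<Sum>c<4. f c) = f 0 + f 1 + f 2 + f 3"
  by (simp add: numeral_eq_Suc add.assoc add.commute add.left_commute)

lemma lmult_matrix_mult:
  "a < 4 \<Longrightarrow> b < 4 \<Longrightarrow> lmult_matrix (p * q) a b = (\<Sum>c<4. lmult_matrix p a c * lmult_matrix q c b)"
  unfolding sum_lessThan_4 less_4_cases
  by (auto simp: lmult_matrix_def quat_coord_def quat_unit_def one_quat_def times_quat_def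
      algebra_simps)

lemma lmult_matrix_zero: "lmult_matrix 0 a b = 0"
  by (simp add: lmult_matrix_def) (simp add: quat_coord_def zero_quat_def)

lemma lmult_matrix_sum: "lmult_matrix (sum f S) a b = (\<Sum>x\<in>S. lmult_matrix (f x) a b)"
proof (induction S rule: infinite_finite_induct)
  case (insert x S)
  moreover have "lmult_matrix (p + q) a b = lmult_matrix p a b + lmult_matrix q a b" for p q
    by (auto simp: lmult_matrix_def quat_coord_def quat_unit_def one_quat_def times_quat_def
        plus_quat_def algebra_simps)
  ultimately show ?case by simp
qed (auto simp: lmult_matrix_zero)

lemma lmult_matrix_one: "a < 4 \<Longrightarrow> b < 4 \<Longrightarrow> lmult_matrix 1 a b = (if a = b then 1 else 0)"
  unfolding less_4_cases
  by (auto simp: lmult_matrix_def quat_coord_def quat_unit_def one_quat_def times_quat_def)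

lemma lmult_matrix_first_col_inj:
  assumes "\<And>a. a < 4 \<Longrightarrow> lmult_matrix p a 0 = lmult_matrix q a 0"
  shows "p = q"
  using assms[of 0] assms[of 1] assms[of 2] assms[of 3]
  by (simp add: lmult_matrix_def quat_unit_def quat_coord_def quat_eq_iff)

definition real_mat_of :: "quat mat \<Rightarrow> real mat" where
  "real_mat_of A = mat (4 * dim_row A) (4 * dim_col A)
     (\<lambda>(u, v). lmult_matrix (A $$ (u div 4, v div 4)) (u mod 4) (v mod 4))"

lemma real_mat_of_carrier: "A \<in> carrier_mat n m \<Longrightarrow> real_mat_of A \<in> carrier_mat (4 * n) (4 * m)"
  by (simp add: real_mat_of_def)

lemma sum_lessThan_mult_4:
  fixes g :: "nat \<Rightarrow> 'a::comm_monoid_add"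
  shows "(\<Sum>w<4 * m. g w) = (\<Sum>l<m. \<Sum>c<4. g (4 * l + c))"
proof -
  have "(\<Sum>w<m * 4. g w) = (\<Sum>l<m. sum g {l * 4..<l * 4 + 4})"
    by (rule sum.nat_group[symmetric])
  also have "\<dots> = (\<Sum>l<m. \<Sum>c<4. g (4 * l + c))"
    using sum.shift_bounds_nat_ivl[of g 0 "_ * 4" 4]
    by (simp add: atLeast0LessThan mult.commute add.commute)
  finally show ?thesis by (simp add: mult.commute)
qed

lemma real_mat_of_mult:
  assumes "A \<in> carrier_mat n m" "B \<in> carrier_mat m k"
  shows "real_mat_of (A * B) = real_mat_of A * real_mat_of B"
proof (rule eq_matI)
  fix u v assume "u < dim_row (real_mat_of A * real_mat_of B)" "v < dim_col (real_mat_of A * real_mat_of B)"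
  hence u: "u < 4 * n" and v: "v < 4 * k" using assms by (auto simp: real_mat_of_def)
  have "real_mat_of (A * B) $$ (u, v) =
      (\<Sum>l<m. lmult_matrix (A $$ (u div 4, l) * B $$ (l, v div 4)) (u mod 4) (v mod 4))"
    using assms u v by (simp add: real_mat_of_def scalar_prod_def lmult_matrix_sum atLeast0LessThan)
  also have "\<dots> = (\<Sum>l<m. \<Sum>c<4. lmult_matrix (A $$ (u div 4, l)) (u mod 4) c *
      lmult_matrix (B $$ (l, v div 4)) c (v mod 4))"
    by (simp add: lmult_matrix_mult)
  also have "\<dots> = (\<Sum>w<4 * m. real_mat_of A $$ (u, w) * real_mat_of B $$ (w, v))"
    unfolding sum_lessThan_mult_4 using assms u v by (intro sum.cong refl) (auto simp: real_mat_of_def)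
  also have "\<dots> = (real_mat_of A * real_mat_of B) $$ (u, v)"
    using assms u v by (simp add: real_mat_of_def scalar_prod_def atLeast0LessThan)
  finally show "real_mat_of (A * B) $$ (u, v) = (real_mat_of A * real_mat_of B) $$ (u, v)" .
qed (use assms in \<open>auto simp: real_mat_of_def\<close>)

lemma real_mat_of_one: "real_mat_of (1\<^sub>m n) = 1\<^sub>m (4 * n)"
proof (rule eq_matI)
  fix u v assume "u < dim_row (1\<^sub>m (4 * n) :: real mat)" "v < dim_col (1\<^sub>m (4 * n) :: real mat)"
  hence u: "u < 4 * n" and v: "v < 4 * n" by auto
  have "real_mat_of (1\<^sub>m n) $$ (u, v) = lmult_matrix (1\<^sub>m n $$ (u div 4, v div 4)) (u mod 4) (v mod 4)"
    using u v by (simp add: real_mat_of_def)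
  also have "\<dots> = 1\<^sub>m (4 * n) $$ (u, v)"
    using u v div_mult_mod_eq[of u 4] div_mult_mod_eq[of v 4]
    by (cases "u div 4 = v div 4") (auto simp: lmult_matrix_one lmult_matrix_zero)
  finally show "real_mat_of (1\<^sub>m n) $$ (u, v) = 1\<^sub>m (4 * n) $$ (u, v)" .
qed (auto simp: real_mat_of_def)

lemma real_mat_of_inj:
  assumes "A \<in> carrier_mat n m" "B \<in> carrier_mat n m" "real_mat_of A = real_mat_of B"
  shows "A = B"
proof (rule eq_matI)
  fix i j assume ij: "i < dim_row B" "j < dim_col B"
  show "A $$ (i, j) = B $$ (i, j)"
  proof (rule lmult_matrix_first_col_inj)
    fix a :: nat assume a: "a < 4"
    have "real_mat_of A $$ (4 * i + a, 4 * j) = real_mat_of B $$ (4 * i + a, 4 * j)"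
      using assms by simp
    moreover have "4 * i + a < 4 * n" "4 * j < 4 * m" "(4 * i + a) div 4 = i" "(4 * i + a) mod 4 = a"
      using assms ij a by auto
    ultimately show "lmult_matrix (A $$ (i, j)) a 0 = lmult_matrix (B $$ (i, j)) a 0"
      using assms unfolding real_mat_of_def by (simp only: index_mat carrier_matD) simp
  qed
qed (use assms in auto)

lemma quat_mat_mult_left_right_inverse:
  assumes "(A :: quat mat) \<in> carrier_mat n n" "B \<in> carrier_mat n n" "A * B = 1\<^sub>m n"
  shows "B * A = 1\<^sub>m n"
proof -
  have "real_mat_of A * real_mat_of B = real_mat_of (A * B)"
    using real_mat_of_mult[OF assms(1,2)] by simp
  also have "\<dots> = 1\<^sub>m (4 * n)"
    by (simp add: assms(3) real_mat_of_one)
  finally have "real_mat_of B * real_mat_of A = 1\<^sub>m (4 * n)"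
    by (rule mat_mult_left_right_inverse[OF real_mat_of_carrier[OF assms(1)]
          real_mat_of_carrier[OF assms(2)]])
  hence "real_mat_of (B * A) = real_mat_of (1\<^sub>m n)"
    using real_mat_of_mult[OF assms(2,1)] real_mat_of_one by simp
  thus ?thesis using assms by (intro real_mat_of_inj[of _ n n]) auto
qed

lemma quat_mat_inverse_unique:
  assumes "(A :: quat mat) \<in> carrier_mat n n" "B \<in> carrier_mat n n" "C \<in> carrier_mat n n"
    and "A * B = 1\<^sub>m n" "A * C = 1\<^sub>m n"
  shows "B = C"
proof -
  have "B = (C * A) * B"
    using quat_mat_mult_left_right_inverse[OF assms(1,3,5)] assms(2) by simp
  also have "\<dots> = C"
    using assms by (simp add: assoc_mult_mat[of C n n A n B n])
  finally show ?thesis .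
qed


text \<open>Square instances of library facts: the simplifier cannot guess intermediate dimensions.\<close>
lemma mult_carrier_mat_square [simp]:
  "A \<in> carrier_mat n n \<Longrightarrow> B \<in> carrier_mat n n \<Longrightarrow> A * B \<in> carrier_mat n n"
  by (rule mult_carrier_mat)

lemma assoc_mult_mat_square [simp]:
  "A \<in> carrier_mat n n \<Longrightarrow> B \<in> carrier_mat n n \<Longrightarrow> C \<in> carrier_mat n n \<Longrightarrow>
    A * B * C = A * (B * C)"
  by (rule assoc_mult_mat)

lemma mat_diag_diagonal: "diagonal_mat (mat_diag n f)"
  by (simp add: mat_diag_def diagonal_mat_def)

lemma diagonal_mat_eq_mat_diag:
  assumes "D \<in> carrier_mat n n" "diagonal_mat D"
  shows "D = mat_diag n (\<lambda>i. D $$ (i, i))"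
  using assms by (auto simp: mat_diag_def diagonal_mat_def)

lemma index_mult_mat_diag_mult:
  assumes "X \<in> carrier_mat n m" "Y \<in> carrier_mat m m'" "i < n" "k < m'"
  shows "(X * mat_diag m d * Y) $$ (i, k) = (\<Sum>l<m. X $$ (i, l) * d l * Y $$ (l, k))"
  using assms by (simp add: mat_diag_mult_right scalar_prod_def atLeast0LessThan)

lemma diagonal_mat_mult:
  assumes "D \<in> carrier_mat n n" "E \<in> carrier_mat n n" "diagonal_mat D" "diagonal_mat E"
  shows "diagonal_mat (D * E)"
proof -
  have "D * E = mat_diag n (\<lambda>i. D $$ (i, i)) * mat_diag n (\<lambda>i. E $$ (i, i))"
    using assms diagonal_mat_eq_mat_diag by metis
  thus ?thesis by (simp add: mat_diag_diagonal)
qed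

lemma diagonal_mat_right_inverse:
  assumes "D \<in> carrier_mat n n" "E \<in> carrier_mat n n" "diagonal_mat D"
    and "D * E = (1\<^sub>m n :: 'a::ring_1_no_zero_divisors mat)"
  shows "diagonal_mat E"
  unfolding diagonal_mat_def
proof (intro allI impI)
  fix i k assume "i < dim_row E" "k < dim_col E" "i \<noteq> k"
  moreover have "D $$ (i, i) * E $$ (i, l) = 1\<^sub>m n $$ (i, l)" if "i < n" "l < n" for l
  proof -
    have "1\<^sub>m n = mat_diag n (\<lambda>i. D $$ (i, i)) * E"
      using assms diagonal_mat_eq_mat_diag by metis
    thus ?thesis using assms(2) that by (simp add: mat_diag_mult_left)
  qed
  ultimately have "D $$ (i, i) * E $$ (i, i) = 1" "D $$ (i, i) * E $$ (i, k) = 0"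
    using assms(2) by auto
  thus "E $$ (i, k) = 0" by auto
qed

lemma zero_col_not_left_invertible:
  assumes "X \<in> carrier_mat n n" "Z \<in> carrier_mat n n" "k < n" "\<And>i. i < n \<Longrightarrow> X $$ (i, k) = 0"
  shows "Z * X \<noteq> (1\<^sub>m n :: 'a::semiring_1 mat)"
proof
  assume "Z * X = 1\<^sub>m n"
  moreover have "(Z * X) $$ (k, k) = 0"
    using assms by (simp add: scalar_prod_def)
  ultimately show False using assms(3) by simp
qed


definition mat_of_qmat :: "nat \<Rightarrow> qmat \<Rightarrow> quat mat" where
  "mat_of_qmat n A = mat n n (\<lambda>(i, k). A i k)"

lemma mat_of_qmat_carrier [simp]: "mat_of_qmat n A \<in> carrier_mat n n"
  and dim_row_mat_of_qmat [simp]: "dim_row (mat_of_qmat n A) = n"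
  and dim_col_mat_of_qmat [simp]: "dim_col (mat_of_qmat n A) = n"
  by (simp_all add: mat_of_qmat_def)

lemma mat_of_qmat_mult: "mat_of_qmat n (qmat_mult n A B) = mat_of_qmat n A * mat_of_qmat n B"
  by (rule eq_matI)
    (auto simp: mat_of_qmat_def qmat_mult_def scalar_prod_def atLeast0LessThan intro!: sum.cong)

lemma qmat_diagonal_iff: "qmat_diagonal n A \<longleftrightarrow> diagonal_mat (mat_of_qmat n A)"
  by (auto simp: qmat_diagonal_def diagonal_mat_def mat_of_qmat_def)

lemma qmat_inverse_of_iff:
  "qmat_inverse_of n A B \<longleftrightarrow>
     mat_of_qmat n A * mat_of_qmat n B = 1\<^sub>m n \<and> mat_of_qmat n B * mat_of_qmat n A = 1\<^sub>m n"
proof -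
  have "qmat_eq n M qmat_id \<longleftrightarrow> mat_of_qmat n M = 1\<^sub>m n" for M
    by (auto simp: qmat_eq_def qmat_id_def mat_of_qmat_def mat_eq_iff)
  thus ?thesis by (simp add: qmat_inverse_of_def mat_of_qmat_mult)
qed

lemma mat_of_qmat_qmat_inv:
  assumes "qmat_invertible n A"
  shows "mat_of_qmat n A * mat_of_qmat n (qmat_inv n A) = 1\<^sub>m n"
proof -
  have "qmat_inverse_of n A (qmat_inv n A)"
    using assms unfolding qmat_invertible_def qmat_inv_def by (rule someI_ex)
  thus ?thesis by (simp add: qmat_inverse_of_iff)
qed

lemma qmat_invertible_iff:
  "qmat_invertible n A \<longleftrightarrow> (\<exists>B \<in> carrier_mat n n. mat_of_qmat n A * B = 1\<^sub>m n)"
proof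
  assume "\<exists>B \<in> carrier_mat n n. mat_of_qmat n A * B = 1\<^sub>m n"
  then obtain B where B: "B \<in> carrier_mat n n" "mat_of_qmat n A * B = 1\<^sub>m n" by blast
  have "mat_of_qmat n (\<lambda>i k. B $$ (i, k)) = B"
    using B(1) by (intro eq_matI) (auto simp: mat_of_qmat_def)
  hence "qmat_inverse_of n A (\<lambda>i k. B $$ (i, k))"
    using B quat_mat_mult_left_right_inverse[OF mat_of_qmat_carrier B]
    by (simp add: qmat_inverse_of_iff)
  thus "qmat_invertible n A" by (auto simp: qmat_invertible_def)
qed (use mat_of_qmat_qmat_inv mat_of_qmat_carrier in blast)

lemma mat_of_qmat_qmat_inv_eq:
  assumes "B \<in> carrier_mat n n" "mat_of_qmat n A * B = 1\<^sub>m n"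
  shows "mat_of_qmat n (qmat_inv n A) = B"
proof -
  have "qmat_invertible n A"
    using assms qmat_invertible_iff by blast
  thus ?thesis
    using assms by (auto intro: quat_mat_inverse_unique[OF mat_of_qmat_carrier _ _ mat_of_qmat_qmat_inv])
qed


section \<open>Decompositions of quaternion tensors\<close>

definition qtensor_sum_of_simple :: "nat \<Rightarrow> nat \<Rightarrow> nat \<Rightarrow> nat \<Rightarrow> qtensor \<Rightarrow> bool" where
  "qtensor_sum_of_simple n1 n2 n3 r T \<longleftrightarrow> (\<exists>S :: nat \<Rightarrow> qtensor.
     (\<forall>l<r. simple_qtensor n1 n2 n3 (S l)) \<and>
     (\<forall>i<n1. \<forall>j<n2. \<forall>k<n3. T i j k = (\<Sum>l<r. S l i j k)))"

text \<open>Unlike in a sum of simple tensors, the terms here may vanish.\<close>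
definition cp_decomposable :: "nat \<Rightarrow> nat \<Rightarrow> nat \<Rightarrow> nat \<Rightarrow> qtensor \<Rightarrow> bool" where
  "cp_decomposable n1 n2 n3 r T \<longleftrightarrow> (\<exists>a b c :: nat \<Rightarrow> nat \<Rightarrow> quat.
     \<forall>i<n1. \<forall>j<n2. \<forall>k<n3. T i j k = (\<Sum>l<r. a l i * b l j * c l k))"

lemma qtensor_rank_eq_Least:
  "qtensor_rank n1 n2 n3 T = (LEAST r. qtensor_sum_of_simple n1 n2 n3 r T)"
  by (simp add: qtensor_rank_def qtensor_sum_of_simple_def)

lemma cp_decomposable_if_sum_of_simple:
  assumes "qtensor_sum_of_simple n1 n2 n3 r T"
  shows "cp_decomposable n1 n2 n3 r T"
proof -
  obtain S where S: "\<forall>l<r. simple_qtensor n1 n2 n3 (S l)"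
    "\<forall>i<n1. \<forall>j<n2. \<forall>k<n3. T i j k = (\<Sum>l<r. S l i j k)"
    using assms by (auto simp: qtensor_sum_of_simple_def)
  then obtain a b c :: "nat \<Rightarrow> nat \<Rightarrow> quat"
    where "\<forall>l<r. \<forall>i<n1. \<forall>j<n2. \<forall>k<n3. S l i j k = a l i * b l j * c l k"
    unfolding simple_qtensor_def by metis
  with S(2) show ?thesis
    unfolding cp_decomposable_def by (intro exI[of _ a] exI[of _ b] exI[of _ c]) simp
qed

lemma qtensor_sum_of_simple_Suc:
  assumes "qtensor_sum_of_simple n1 n2 n3 r T" "simple_qtensor n1 n2 n3 U"
  shows "qtensor_sum_of_simple n1 n2 n3 (Suc r) (\<lambda>i j k. T i j k + U i j k)"
proof -
  obtain S where S: "\<forall>l<r. simple_qtensor n1 n2 n3 (S l)"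
    "\<forall>i<n1. \<forall>j<n2. \<forall>k<n3. T i j k = (\<Sum>l<r. S l i j k)"
    using assms(1) by (auto simp: qtensor_sum_of_simple_def)
  have "(\<Sum>l<r. (S(r := U)) l i j k) = (\<Sum>l<r. S l i j k)" for i j k
    by (intro sum.cong) auto
  with S assms(2) show ?thesis
    unfolding qtensor_sum_of_simple_def by (intro exI[of _ "S(r := U)"]) (auto simp: less_Suc_eq)
qed

lemma qtensor_sum_of_simple_cong:
  assumes "qtensor_sum_of_simple n1 n2 n3 r T" "\<forall>i<n1. \<forall>j<n2. \<forall>k<n3. T' i j k = T i j k"
  shows "qtensor_sum_of_simple n1 n2 n3 r T'"
  using assms by (auto simp: qtensor_sum_of_simple_def)

lemma sum_of_simple_if_cp_decomposable:
  assumes "cp_decomposable n1 n2 n3 r T"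
  shows "\<exists>r' \<le> r. qtensor_sum_of_simple n1 n2 n3 r' T"
proof -
  obtain a b c :: "nat \<Rightarrow> nat \<Rightarrow> quat"
    where "\<forall>i<n1. \<forall>j<n2. \<forall>k<n3. T i j k = (\<Sum>l<r. a l i * b l j * c l k)"
    using assms by (auto simp: cp_decomposable_def)
  thus ?thesis
  proof (induction r arbitrary: T)
    case 0
    thus ?case by (auto simp: qtensor_sum_of_simple_def)
  next
    case (Suc r)
    define T' where "T' i j k = (\<Sum>l<r. a l i * b l j * c l k)" for i j k
    define U where "U i j k = a r i * b r j * c r k" for i j k
    have "\<forall>i<n1. \<forall>j<n2. \<forall>k<n3. T' i j k = (\<Sum>l<r. a l i * b l j * c l k)"
      by (simp add: T'_def)
    from Suc.IH[OF this] obtain r' where r': "r' \<le> r" "qtensor_sum_of_simple n1 n2 n3 r' T'"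
      by blast
    have T: "\<forall>i<n1. \<forall>j<n2. \<forall>k<n3. T i j k = T' i j k + U i j k"
      using Suc.prems by (simp add: T'_def U_def)
    show ?case
    proof (cases "simple_qtensor n1 n2 n3 U")
      case True
      with r' have "qtensor_sum_of_simple n1 n2 n3 (Suc r') (\<lambda>i j k. T' i j k + U i j k)"
        by (intro qtensor_sum_of_simple_Suc)
      with r'(1) T show ?thesis
        by (intro exI[of _ "Suc r'"]) (auto intro: qtensor_sum_of_simple_cong)
    next
      case False
      have "\<exists>a' b' c'. \<forall>i<n1. \<forall>j<n2. \<forall>k<n3. U i j k = a' i * b' j * c' k"
        unfolding U_def by blast
      with False have "\<forall>i<n1. \<forall>j<n2. \<forall>k<n3. U i j k = 0"
        unfolding simple_qtensor_def by blast
      with T have "\<forall>i<n1. \<forall>j<n2. \<forall>k<n3. T i j k = T' i j k"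
        by simp
      with r' show ?thesis
        by (intro exI[of _ r']) (auto intro: qtensor_sum_of_simple_cong)
    qed
  qed
qed

lemma cp_decomposable_trivial: "cp_decomposable n1 n2 n3 (n1 * n2) T"
proof -
  define a :: "nat \<Rightarrow> nat \<Rightarrow> quat" where "a t i = (if i = t div n2 then 1 else 0)" for t i
  define b :: "nat \<Rightarrow> nat \<Rightarrow> quat" where "b t j = (if j = t mod n2 then 1 else 0)" for t j
  define c where "c t k = T (t div n2) (t mod n2) k" for t k
  have "T i j k = (\<Sum>t<n1 * n2. a t i * b t j * c t k)" if "i < n1" "j < n2" for i j k
  proof -
    have "a t i * b t j * c t k = (if t = i * n2 + j then T i j k else 0)" for t
    proof (cases "t = i * n2 + j")
      case False
      hence "i \<noteq> t div n2 \<or> j \<noteq> t mod n2"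
        by (metis div_mult_mod_eq)
      thus ?thesis using False by (auto simp: a_def b_def c_def)
    qed (use \<open>j < n2\<close> in \<open>simp add: a_def b_def c_def\<close>)
    moreover have "i * n2 + j < n1 * n2"
    proof -
      have "i * n2 + j < Suc i * n2" using \<open>j < n2\<close> by simp
      also have "\<dots> \<le> n1 * n2" using \<open>i < n1\<close> by (intro mult_le_mono1) simp
      finally show ?thesis .
    qed
    ultimately show ?thesis by simp
  qed
  thus ?thesis unfolding cp_decomposable_def by blast
qed

lemma cp_decomposable_length_ge:
  assumes "0 < p" "qmat_invertible n (frontal_slice T 0)" "cp_decomposable n p n r T"
  shows "n \<le> r"
proof (rule ccontr)
  assume "\<not> n \<le> r"
  obtain a b c :: "nat \<Rightarrow> nat \<Rightarrow> quat"
    where T: "\<forall>i<n. \<forall>j<p. \<forall>k<n. T i j k = (\<Sum>l<r. a l i * b l j * c l k)"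
    using assms(3) by (auto simp: cp_decomposable_def)
  define X where "X = mat n n (\<lambda>(i, l). if l < r then a l i else 0)"
  define Y where "Y = mat n n (\<lambda>(l, k). c l k)"
  define D where "D = mat_diag n (\<lambda>l. b l 0)"
  have X: "X \<in> carrier_mat n n" and Y: "Y \<in> carrier_mat n n" and D: "D \<in> carrier_mat n n"
    by (simp_all add: X_def Y_def D_def)
  have A0: "mat_of_qmat n (frontal_slice T 0) = X * D * Y"
    unfolding D_def
  proof (rule eq_matI)
    fix i k assume "i < dim_row (X * mat_diag n (\<lambda>l. b l 0) * Y)" "k < dim_col (X * mat_diag n (\<lambda>l. b l 0) * Y)"
    hence ik: "i < n" "k < n" using X Y by simp_all
    have sets: "{..<n} \<inter> {l. l < r} = {..<r}"
      using \<open>\<not> n \<le> r\<close> by auto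
    have "(\<Sum>l<n. X $$ (i, l) * b l 0 * Y $$ (l, k)) = (\<Sum>l<n. if l < r then a l i * b l 0 * c l k else 0)"
      using ik by (intro sum.cong) (simp_all add: X_def Y_def)
    also have "\<dots> = (\<Sum>l<r. a l i * b l 0 * c l k)"
      using sets by (simp add: sum.If_cases)
    finally show "mat_of_qmat n (frontal_slice T 0) $$ (i, k) = (X * mat_diag n (\<lambda>l. b l 0) * Y) $$ (i, k)"
      using T assms(1) ik
      by (simp add: index_mult_mat_diag_mult[OF X Y] mat_of_qmat_def frontal_slice_def del: index_mult_mat)
  qed (use X Y in simp_all)
  obtain B where B: "B \<in> carrier_mat n n" "mat_of_qmat n (frontal_slice T 0) * B = 1\<^sub>m n"
    using assms(2) unfolding qmat_invertible_iff by blast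
  define Z where "Z = D * Y * B"
  have Z: "Z \<in> carrier_mat n n" "X * Z = 1\<^sub>m n"
    using A0 B X Y D by (simp_all add: Z_def)
  have "Z * X \<noteq> 1\<^sub>m n"
    using \<open>\<not> n \<le> r\<close> by (intro zero_col_not_left_invertible[OF X Z(1), of r]) (simp_all add: X_def)
  thus False
    using quat_mat_mult_left_right_inverse[OF X Z] by simp
qed

lemma qtensor_rank_eq_iff_cp_decomposable:
  assumes "0 < p" "qmat_invertible n (frontal_slice T 0)"
  shows "qtensor_rank n p n T = n \<longleftrightarrow> cp_decomposable n p n n T"
proof -
  have lower: "n \<le> r" if "qtensor_sum_of_simple n p n r T" for r
    using cp_decomposable_length_ge[OF assms cp_decomposable_if_sum_of_simple[OF that]] .
  have "\<exists>r. qtensor_sum_of_simple n p n r T"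
    using sum_of_simple_if_cp_decomposable[OF cp_decomposable_trivial] by blast
  hence least: "qtensor_sum_of_simple n p n (qtensor_rank n p n T) T"
    unfolding qtensor_rank_eq_Least by (rule LeastI_ex)
  show ?thesis
  proof
    assume "cp_decomposable n p n n T"
    then obtain r where "r \<le> n" "qtensor_sum_of_simple n p n r T"
      using sum_of_simple_if_cp_decomposable by blast
    with lower have "qtensor_sum_of_simple n p n n T"
      using le_antisym by blast
    thus "qtensor_rank n p n T = n"
      unfolding qtensor_rank_eq_Least by (rule Least_equality) (rule lower)
  qed (use least in \<open>auto intro: cp_decomposable_if_sum_of_simple\<close>)
qed


section \<open>Slice factorizations and simultaneous diagonalization\<close>

lemma cp_decomposable_iff_slice_factorization:
  "cp_decomposable n p n n T \<longleftrightarrow> (\<exists>X Y D. X \<in> carrier_mat n n \<and> Y \<in> carrier_mat n n \<and>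
     (\<forall>j<p. D j \<in> carrier_mat n n \<and> diagonal_mat (D j) \<and>
        mat_of_qmat n (frontal_slice T j) = X * D j * Y))"
proof
  assume "cp_decomposable n p n n T"
  then obtain a b c :: "nat \<Rightarrow> nat \<Rightarrow> quat"
    where T: "\<forall>i<n. \<forall>j<p. \<forall>k<n. T i j k = (\<Sum>l<n. a l i * b l j * c l k)"
    by (auto simp: cp_decomposable_def)
  define X where "X = mat n n (\<lambda>(i, l). a l i)"
  define Y where "Y = mat n n (\<lambda>(l, k). c l k)"
  have X: "X \<in> carrier_mat n n" and Y: "Y \<in> carrier_mat n n"
    by (simp_all add: X_def Y_def)
  have "mat_of_qmat n (frontal_slice T j) = X * mat_diag n (\<lambda>l. b l j) * Y" if "j < p" for j
  proof (rule eq_matI)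
    fix i k assume "i < dim_row (X * mat_diag n (\<lambda>l. b l j) * Y)" "k < dim_col (X * mat_diag n (\<lambda>l. b l j) * Y)"
    with X Y have "i < n" "k < n" by simp_all
    with T that show "mat_of_qmat n (frontal_slice T j) $$ (i, k) = (X * mat_diag n (\<lambda>l. b l j) * Y) $$ (i, k)"
      by (simp add: index_mult_mat_diag_mult[OF X Y] del: index_mult_mat)
        (simp add: X_def Y_def mat_of_qmat_def frontal_slice_def)
  qed (use X Y in simp_all)
  thus "\<exists>X Y D. X \<in> carrier_mat n n \<and> Y \<in> carrier_mat n n \<and>
     (\<forall>j<p. D j \<in> carrier_mat n n \<and> diagonal_mat (D j) \<and>
        mat_of_qmat n (frontal_slice T j) = X * D j * Y)"
    using X Y
    by (intro exI[of _ X] exI[of _ Y] exI[of _ "\<lambda>j. mat_diag n (\<lambda>l. b l j)"])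
      (simp add: mat_diag_diagonal)
next
  assume "\<exists>X Y D. X \<in> carrier_mat n n \<and> Y \<in> carrier_mat n n \<and>
     (\<forall>j<p. D j \<in> carrier_mat n n \<and> diagonal_mat (D j) \<and>
        mat_of_qmat n (frontal_slice T j) = X * D j * Y)"
  then obtain X Y D where XY: "X \<in> carrier_mat n n" "Y \<in> carrier_mat n n"
    and T: "\<forall>j<p. D j \<in> carrier_mat n n \<and> diagonal_mat (D j) \<and>
        mat_of_qmat n (frontal_slice T j) = X * D j * Y"
    by blast
  have "T i j k = (\<Sum>l<n. X $$ (i, l) * D j $$ (l, l) * Y $$ (l, k))"
    if "i < n" "j < p" "k < n" for i j k
  proof -
    have "mat_of_qmat n (frontal_slice T j) = X * mat_diag n (\<lambda>l. D j $$ (l, l)) * Y"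
      using T \<open>j < p\<close> diagonal_mat_eq_mat_diag by metis
    from arg_cong[OF this, of "\<lambda>M. M $$ (i, k)"] that show ?thesis
      by (simp add: index_mult_mat_diag_mult[OF XY] mat_of_qmat_def frontal_slice_def del: index_mult_mat)
  qed
  thus "cp_decomposable n p n n T"
    unfolding cp_decomposable_def
    by (intro exI[of _ "\<lambda>l i. X $$ (i, l)"] exI[of _ "\<lambda>l j. D j $$ (l, l)"]
        exI[of _ "\<lambda>l k. Y $$ (l, k)"]) simp
qed

lemma simultaneously_diagonalizable_if_slice_factorization:
  fixes A :: "nat \<Rightarrow> quat mat"
  assumes "0 < p" "B \<in> carrier_mat n n" "A 0 * B = 1\<^sub>m n"
    and X: "X \<in> carrier_mat n n" and Y: "Y \<in> carrier_mat n n"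
    and A: "\<forall>j<p. D j \<in> carrier_mat n n \<and> diagonal_mat (D j) \<and> A j = X * D j * Y"
  shows "\<exists>P Q. P \<in> carrier_mat n n \<and> Q \<in> carrier_mat n n \<and> P * Q = 1\<^sub>m n \<and>
    (\<forall>j. 1 \<le> j \<and> j < p \<longrightarrow> diagonal_mat (Q * (A j * B * P)))"
proof -
  have D0: "D 0 \<in> carrier_mat n n" "diagonal_mat (D 0)"
    using A assms(1) by simp_all
  define R where "R = D 0 * Y * B"
  define E where "E = Y * B * X"
  have R: "R \<in> carrier_mat n n" and E: "E \<in> carrier_mat n n"
    using assms(2) X Y D0(1) by (simp_all add: R_def E_def)
  have "X * R = A 0 * B"
    using A assms(1,2) X Y D0(1) by (simp add: R_def)
  hence XR: "X * R = 1\<^sub>m n"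
    using assms(3) by simp
  hence RX: "R * X = 1\<^sub>m n"
    by (rule quat_mat_mult_left_right_inverse[OF X R])
  have "D 0 * E = R * X"
    using assms(2) X Y D0(1) by (simp add: R_def E_def)
  with RX have "D 0 * E = 1\<^sub>m n"
    by simp
  hence E_diag: "diagonal_mat E"
    by (rule diagonal_mat_right_inverse[OF D0(1) E D0(2)])
  have RX_cancel: "R * (X * M) = M" if M: "M \<in> carrier_mat n n" for M
  proof -
    have "R * (X * M) = (R * X) * M"
      by (rule assoc_mult_mat[OF R X M, symmetric])
    also have "\<dots> = M"
      using RX M by simp
    finally show ?thesis .
  qed
  have "diagonal_mat (R * (A j * B * X))" if "j < p" for j
  proof -
    have Dj: "D j \<in> carrier_mat n n" "diagonal_mat (D j)" "A j = X * D j * Y"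
      using A that by simp_all
    hence "R * (A j * B * X) = D j * E"
      using RX_cancel assms(2) X Y by (simp add: E_def)
    thus ?thesis
      using diagonal_mat_mult[OF Dj(1) E Dj(2) E_diag] by simp
  qed
  with XR R X show ?thesis
    by (intro exI[of _ X] exI[of _ R]) auto
qed

lemma slice_factorization_if_simultaneously_diagonalizable:
  fixes A :: "nat \<Rightarrow> quat mat"
  assumes "0 < p" and A: "\<forall>j<p. A j \<in> carrier_mat n n"
    and B: "B \<in> carrier_mat n n" "A 0 * B = 1\<^sub>m n"
    and P: "P \<in> carrier_mat n n" and Q: "Q \<in> carrier_mat n n" and PQ: "P * Q = 1\<^sub>m n"
    and diag: "\<forall>j. 1 \<le> j \<and> j < p \<longrightarrow> diagonal_mat (Q * (A j * B * P))"
  shows "\<exists>X Y D. X \<in> carrier_mat n n \<and> Y \<in> carrier_mat n n \<and>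
    (\<forall>j<p. D j \<in> carrier_mat n n \<and> diagonal_mat (D j) \<and> A j = X * D j * Y)"
proof -
  define D where "D j = (if j = 0 then 1\<^sub>m n else Q * (A j * B * P))" for j
  have A0: "A 0 \<in> carrier_mat n n"
    using A assms(1) by simp
  have BA: "B * A 0 = 1\<^sub>m n"
    by (rule quat_mat_mult_left_right_inverse[OF A0 B])
  have PQ_cancel: "P * (Q * M) = M" if M: "M \<in> carrier_mat n n" for M
  proof -
    have "P * (Q * M) = (P * Q) * M"
      by (rule assoc_mult_mat[OF P Q M, symmetric])
    also have "\<dots> = M"
      using PQ M by simp
    finally show ?thesis .
  qed
  have "D j \<in> carrier_mat n n \<and> diagonal_mat (D j) \<and> A j = P * D j * (Q * A 0)" if "j < p" for j
  proof (intro conjI)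
    have Aj: "A j \<in> carrier_mat n n"
      using A that by simp
    thus "D j \<in> carrier_mat n n"
      using B P Q by (simp add: D_def)
    show "A j = P * D j * (Q * A 0)"
      using Aj A0 B BA P Q PQ_cancel by (simp add: D_def)
    have "diagonal_mat (Q * (A j * B * P))" if "j \<noteq> 0"
      using diag that \<open>j < p\<close> by simp
    thus "diagonal_mat (D j)"
      by (simp add: D_def diagonal_mat_def)
  qed
  moreover have "Q * A 0 \<in> carrier_mat n n"
    using Q A0 by simp
  ultimately show ?thesis
    using P by blast
qed

lemma qmat_simultaneously_diagonalizable_iff:
  "(\<exists>P. qmat_invertible n P \<and>
      (\<forall>j. 1 \<le> j \<and> j < p \<longrightarrow> qmat_diagonal n (qmat_mult n (qmat_inv n P) (qmat_mult n (M j) P))))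
   \<longleftrightarrow> (\<exists>P Q. P \<in> carrier_mat n n \<and> Q \<in> carrier_mat n n \<and> P * Q = 1\<^sub>m n \<and>
      (\<forall>j. 1 \<le> j \<and> j < p \<longrightarrow> diagonal_mat (Q * (mat_of_qmat n (M j) * P))))"
proof
  assume "\<exists>P. qmat_invertible n P \<and>
      (\<forall>j. 1 \<le> j \<and> j < p \<longrightarrow> qmat_diagonal n (qmat_mult n (qmat_inv n P) (qmat_mult n (M j) P)))"
  then obtain P where "qmat_invertible n P"
    "\<forall>j. 1 \<le> j \<and> j < p \<longrightarrow> qmat_diagonal n (qmat_mult n (qmat_inv n P) (qmat_mult n (M j) P))"
    by blast
  thus "\<exists>P Q. P \<in> carrier_mat n n \<and> Q \<in> carrier_mat n n \<and> P * Q = 1\<^sub>m n \<and>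
      (\<forall>j. 1 \<le> j \<and> j < p \<longrightarrow> diagonal_mat (Q * (mat_of_qmat n (M j) * P)))"
    by (intro exI[of _ "mat_of_qmat n P"] exI[of _ "mat_of_qmat n (qmat_inv n P)"])
      (simp add: mat_of_qmat_qmat_inv qmat_diagonal_iff mat_of_qmat_mult)
next
  assume "\<exists>P Q. P \<in> carrier_mat n n \<and> Q \<in> carrier_mat n n \<and> P * Q = 1\<^sub>m n \<and>
      (\<forall>j. 1 \<le> j \<and> j < p \<longrightarrow> diagonal_mat (Q * (mat_of_qmat n (M j) * P)))"
  then obtain P Q where PQ: "P \<in> carrier_mat n n" "Q \<in> carrier_mat n n" "P * Q = 1\<^sub>m n"
    and diag: "\<forall>j. 1 \<le> j \<and> j < p \<longrightarrow> diagonal_mat (Q * (mat_of_qmat n (M j) * P))"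
    by blast
  define P' where "P' i k = P $$ (i, k)" for i k
  have P': "mat_of_qmat n P' = P"
    using PQ(1) by (intro eq_matI) (auto simp: mat_of_qmat_def P'_def)
  hence "qmat_invertible n P'" and "mat_of_qmat n (qmat_inv n P') = Q"
    using PQ qmat_invertible_iff mat_of_qmat_qmat_inv_eq by auto
  with P' diag show "\<exists>P. qmat_invertible n P \<and>
      (\<forall>j. 1 \<le> j \<and> j < p \<longrightarrow> qmat_diagonal n (qmat_mult n (qmat_inv n P) (qmat_mult n (M j) P)))"
    by (intro exI[of _ P']) (simp add: qmat_diagonal_iff mat_of_qmat_mult)
qed

theorem mainTheorem3:
  fixes n p :: nat and T :: qtensor
  assumes "p \<ge> 1"
    and "qmat_invertible n (frontal_slice T 0)"
  shows "qtensor_rank n p n T = n \<longleftrightarrow>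
    (\<exists>P. qmat_invertible n P \<and>
       (\<forall>j. 1 \<le> j \<and> j < p \<longrightarrow>
          qmat_diagonal n
            (qmat_mult n (qmat_inv n P)
               (qmat_mult n (qmat_mult n (frontal_slice T j) (qmat_inv n (frontal_slice T 0))) P))))"
proof -
  define A where "A j = mat_of_qmat n (frontal_slice T j)" for j
  define B where "B = mat_of_qmat n (qmat_inv n (frontal_slice T 0))"
  have p: "0 < p" using assms(1) by simp
  have AB: "A 0 * B = 1\<^sub>m n"
    using mat_of_qmat_qmat_inv[OF assms(2)] by (simp add: A_def B_def)
  have "qtensor_rank n p n T = n \<longleftrightarrow> cp_decomposable n p n n T"
    by (rule qtensor_rank_eq_iff_cp_decomposable[OF p assms(2)])
  also have "\<dots> \<longleftrightarrow> (\<exists>X Y D. X \<in> carrier_mat n n \<and> Y \<in> carrier_mat n n \<and>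
      (\<forall>j<p. D j \<in> carrier_mat n n \<and> diagonal_mat (D j) \<and> A j = X * D j * Y))"
    unfolding A_def by (rule cp_decomposable_iff_slice_factorization)
  also have "\<dots> \<longleftrightarrow> (\<exists>P Q. P \<in> carrier_mat n n \<and> Q \<in> carrier_mat n n \<and> P * Q = 1\<^sub>m n \<and>
      (\<forall>j. 1 \<le> j \<and> j < p \<longrightarrow> diagonal_mat (Q * (A j * B * P))))"
    using simultaneously_diagonalizable_if_slice_factorization[of p B n A]
      slice_factorization_if_simultaneously_diagonalizable[of p A n B] p AB
    by (auto simp: A_def B_def)
  finally show ?thesis
    unfolding qmat_simultaneously_diagonalizable_iff by (simp add: mat_of_qmat_mult A_def B_def)
qed

end
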